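(* Let $V$ be a finite dimensional real vector space and $f_1, f_2 \in C^2(V)$ be functions such that $d^2 f_1(x)$ and $d^2 f_2(x)$ are positive definite for all $x \in V$. Then $d(f_1 + f_2)(V) = df_1(V) + df_2(V)$ (Minkowski sum). *)

theory Defs
  imports "HOL-Analysis.Analysis"
begin

definition C2_with :: "('a::euclidean_space \<Rightarrow> real) \<Rightarrow> ('a \<Rightarrow> ('a \<Rightarrow>\<^sub>L real))
    \<Rightarrow> ('a \<Rightarrow> ('a \<Rightarrow>\<^sub>L ('a \<Rightarrow>\<^sub>L real))) \<Rightarrow> bool" where
  "C2_with f Df D2f \<longleftrightarrow>
     (\<forall>x. (f has_derivative blinfun_apply (Df x)) (at x)) \<and>
     (\<forall>x. (Df has_derivative blinfun_apply (D2f x)) (at x)) \<and>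
     continuous_on UNIV D2f"

definition pos_def_form :: "('a::real_normed_vector \<Rightarrow>\<^sub>L ('a \<Rightarrow>\<^sub>L real)) \<Rightarrow> bool" where
  "pos_def_form B \<longleftrightarrow> (\<forall>v. v \<noteq> 0 \<longrightarrow> blinfun_apply (blinfun_apply B v) v > 0)"

end

theory Submission
  imports Defs
begin

text \<open>
  Fix \<open>a = df\<^sub>1(x\<^sub>1)\<close> and \<open>b = df\<^sub>2(x\<^sub>2)\<close>. Positive definiteness of the Hessian makes
  \<open>f\<^sub>1 - a\<close> convex along every ray from \<open>x\<^sub>1\<close>, critical at \<open>x\<^sub>1\<close> and with strictly
  positive slope at distance one; by compactness of the unit sphere this slope is bounded below,
  so \<open>f\<^sub>1 - a\<close> grows at least linearly, and likewise \<open>f\<^sub>2 - b\<close>. Hence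
  \<open>f\<^sub>1 + f\<^sub>2 - (a + b)\<close> is coercive and attains a global minimum, where
  \<open>d(f\<^sub>1 + f\<^sub>2) = a + b\<close>. The reverse inclusion is additivity of the derivative.
\<close>


lemma convex_on_ray_lower_bound:
  fixes p :: "real \<Rightarrow> real"
  assumes convex: "convex_on UNIV p"
    and crit: "(p has_real_derivative 0) (at 0)"
    and slope: "(p has_real_derivative d) (at 1)"
    and "0 \<le> c" "c \<le> d" "0 \<le> s"
  shows "p 0 + c * (s - 1) \<le> p s"
proof -
  have tangent: "p' * (x - y) \<le> p x - p y"
    if "(p has_real_derivative p') (at y)" for x y p'
    using convex_on_imp_above_tangent[OF convex] that by auto
  show ?thesis
  proof (cases "s \<ge> 1")
    case True
    then have "c * (s - 1) \<le> d * (s - 1)" using \<open>c \<le> d\<close> by (simp add: mult_right_mono)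
    then show ?thesis using tangent[OF slope, of s] tangent[OF crit, of 1] by linarith
  next
    case False
    then have "c * (s - 1) \<le> 0" using \<open>0 \<le> c\<close> by (simp add: mult_nonneg_nonpos)
    then show ?thesis using tangent[OF crit, of s] by linarith
  qed
qed

lemma has_real_derivative_along_line:
  fixes f :: "'a::real_normed_vector \<Rightarrow> real"
  assumes "(f has_derivative F) (at (x0 + t *\<^sub>R v))"
  shows "((\<lambda>t. f (x0 + t *\<^sub>R v)) has_real_derivative F v) (at t)"
proof -
  have line: "((\<lambda>t::real. x0 + t *\<^sub>R v) has_derivative (\<lambda>h. h *\<^sub>R v)) (at t)"
    by (auto intro!: derivative_eq_intros)
  have "linear F" using assms has_derivative_linear by blast
  then have "(\<lambda>h. F (h *\<^sub>R v)) = (*) (F v)" by (auto simp: linear_scale)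
  with has_derivative_compose[OF line assms] show ?thesis
    unfolding has_field_derivative_def by simp
qed

lemma pos_def_hessian_ray_bound:
  fixes f :: "'a::euclidean_space \<Rightarrow> real"
  assumes C2: "C2_with f Df D2f" and pd: "\<forall>x. pos_def_form (D2f x)" and "v \<noteq> 0"
  shows "0 < Df (x0 + v) v - Df x0 v"
    and "\<And>c s. 0 \<le> c \<Longrightarrow> c \<le> Df (x0 + v) v - Df x0 v \<Longrightarrow> 0 \<le> s \<Longrightarrow>
           f x0 - Df x0 x0 + c * (s - 1) \<le> f (x0 + s *\<^sub>R v) - Df x0 (x0 + s *\<^sub>R v)"
proof -
  have dF: "\<And>x. (f has_derivative blinfun_apply (Df x)) (at x)"
    and dD: "\<And>x. (Df has_derivative blinfun_apply (D2f x)) (at x)"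
    using C2 unfolding C2_with_def by auto
  define p where "p = (\<lambda>t. f (x0 + t *\<^sub>R v) - Df x0 (x0 + t *\<^sub>R v))"
  define p' where "p' = (\<lambda>t. Df (x0 + t *\<^sub>R v) v - Df x0 v)"
  have p: "(p has_real_derivative p' t) (at t)" for t
  proof -
    have "((\<lambda>y. f y - Df x0 y) has_derivative (\<lambda>h. Df (x0 + t *\<^sub>R v) h - Df x0 h))
        (at (x0 + t *\<^sub>R v))"
      by (intro has_derivative_diff dF bounded_linear_imp_has_derivative blinfun.bounded_linear_right)
    from has_real_derivative_along_line[OF this] show ?thesis by (simp add: p_def p'_def)
  qed
  have p': "(p' has_real_derivative D2f (x0 + t *\<^sub>R v) v v) (at t)" for t
  proof -
    have "((\<lambda>y. Df y v - Df x0 v) has_derivative (\<lambda>h. D2f (x0 + t *\<^sub>R v) h v - 0))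
        (at (x0 + t *\<^sub>R v))"
      by (intro has_derivative_diff has_derivative_const
          bounded_linear.has_derivative[OF blinfun.bounded_linear_left dD])
    from has_real_derivative_along_line[OF this] show ?thesis by (simp add: p'_def)
  qed
  have curvature: "D2f (x0 + t *\<^sub>R v) v v > 0" for t
    using pd \<open>v \<noteq> 0\<close> unfolding pos_def_form_def by blast
  have "p' 0 < p' 1"
    by (rule DERIV_pos_imp_increasing) (use p' curvature in auto)
  then show "0 < Df (x0 + v) v - Df x0 v" by (simp add: p'_def)
  have "convex_on UNIV p"
    using f''_ge0_imp_convex[OF convex_UNIV p p'] curvature less_imp_le by blast
  moreover have "(p has_real_derivative 0) (at 0)" using p[of 0] by (simp add: p'_def)
  moreover have "(p has_real_derivative Df (x0 + v) v - Df x0 v) (at 1)" using p[of 1] by (simp add: p'_def)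
  ultimately show "f x0 - Df x0 x0 + c * (s - 1) \<le> f (x0 + s *\<^sub>R v) - Df x0 (x0 + s *\<^sub>R v)"
    if "0 \<le> c" "c \<le> Df (x0 + v) v - Df x0 v" "0 \<le> s" for c s
    using convex_on_ray_lower_bound that unfolding p_def by fastforce
qed

lemma pos_def_hessian_linear_growth:
  fixes f :: "'a::euclidean_space \<Rightarrow> real"
  assumes C2: "C2_with f Df D2f" and pd: "\<forall>x. pos_def_form (D2f x)"
  shows "\<exists>c>0. \<exists>K. \<forall>z. K + c * norm z \<le> f z - Df x0 z"
proof -
  define q where "q = (\<lambda>v. Df (x0 + v) v - Df x0 v)"
  have "continuous_on UNIV Df"
    using C2 unfolding C2_with_def
    by (meson continuous_at_imp_continuous_on has_derivative_continuous)
  then have "continuous_on (sphere 0 1) q"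
    unfolding q_def by (auto intro!: continuous_intros continuous_on_compose2[of UNIV Df])
  moreover have "sphere (0::'a) 1 \<noteq> {}" by simp
  ultimately obtain u where u: "u \<in> sphere 0 1" and u_min: "\<And>v. v \<in> sphere 0 1 \<Longrightarrow> q u \<le> q v"
    using continuous_attains_inf[OF compact_sphere] by blast
  have c: "0 < q u"
    using pos_def_hessian_ray_bound(1)[OF C2 pd, of u] u unfolding q_def by force
  have "f x0 - Df x0 x0 - q u * (norm x0 + 1) + q u * norm z \<le> f z - Df x0 z" for z
  proof -
    obtain v where v: "v \<in> sphere 0 1" and z: "z = x0 + norm (z - x0) *\<^sub>R v"
    proof (cases "z = x0")
      case True
      then show ?thesis using that[OF u] by simp
    next
      case False
      then show ?thesis using that[of "(1 / norm (z - x0)) *\<^sub>R (z - x0)"] by simp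
    qed
    have "f x0 - Df x0 x0 + q u * (norm (z - x0) - 1) \<le> f z - Df x0 z"
      using pos_def_hessian_ray_bound(2)[OF C2 pd, where v=v and c="q u" and s="norm (z - x0)"] v u_min c
      unfolding q_def by (force simp flip: z)
    moreover have "q u * (norm z - norm x0 - 1) \<le> q u * (norm (z - x0) - 1)"
      using c norm_triangle_ineq2[of z x0] by (simp add: mult_left_mono)
    ultimately show ?thesis by (simp add: algebra_simps)
  qed
  then show ?thesis using c by blast
qed

lemma continuous_linear_growth_attains_min:
  fixes g :: "'a::{real_normed_vector,heine_borel} \<Rightarrow> real"
  assumes cont: "continuous_on UNIV g" and c: "0 < c" and growth: "\<And>z. K + c * norm z \<le> g z"
  shows "\<exists>z. \<forall>y. g z \<le> g y"
proof -
  define R where "R = \<bar>g 0 - K\<bar> / c"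
  have far: "g 0 < g y" if "R < norm y" for y
  proof -
    have "\<bar>g 0 - K\<bar> < c * norm y" using that c by (simp add: R_def pos_divide_less_eq mult.commute)
    then show ?thesis using growth[of y] by linarith
  qed
  have "0 \<in> cball (0::'a) R" using c by (simp add: R_def)
  then obtain z where z: "z \<in> cball 0 R" and z_min: "\<And>y. y \<in> cball 0 R \<Longrightarrow> g z \<le> g y"
    using continuous_attains_inf[OF compact_cball _ continuous_on_subset[OF cont]] by blast
  have "g z \<le> g y" for y
    using z_min[of y] z_min[OF \<open>0 \<in> cball 0 R\<close>] far[of y] by fastforce
  then show ?thesis by blast
qed

lemma linear_growth_imp_in_range_derivative:
  fixes f :: "'a::{real_normed_vector,heine_borel} \<Rightarrow> real" and a :: "'a \<Rightarrow>\<^sub>L real"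
  assumes deriv: "\<And>x. (f has_derivative blinfun_apply (Df x)) (at x)"
    and "0 < c" and "\<And>z. K + c * norm z \<le> f z - a z"
  shows "a \<in> range Df"
proof -
  have deriv_diff: "((\<lambda>y. f y - a y) has_derivative (\<lambda>h. Df x h - a h)) (at x)" for x
    by (intro has_derivative_diff deriv bounded_linear_imp_has_derivative blinfun.bounded_linear_right)
  then have "continuous_on UNIV (\<lambda>y. f y - a y)"
    by (meson continuous_at_imp_continuous_on has_derivative_continuous)
  then obtain z where "\<forall>y. f z - a z \<le> f y - a y"
    using continuous_linear_growth_attains_min assms by blast
  then have "(\<lambda>h. Df z h - a h) = (\<lambda>h. 0)"
    using has_derivative_local_min[OF deriv_diff] by simp
  then have "Df z = a" by (intro blinfun_eqI) (metis eq_iff_diff_eq_0)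
  then show ?thesis by (metis rangeI)
qed

theorem lemma1p19:
  fixes f1 f2 :: "'a::euclidean_space \<Rightarrow> real"
    and Df1 Df2 :: "'a \<Rightarrow> ('a \<Rightarrow>\<^sub>L real)"
    and D2f1 D2f2 :: "'a \<Rightarrow> ('a \<Rightarrow>\<^sub>L ('a \<Rightarrow>\<^sub>L real))"
    and Dsum :: "'a \<Rightarrow> ('a \<Rightarrow>\<^sub>L real)"
  assumes "C2_with f1 Df1 D2f1" and "C2_with f2 Df2 D2f2"
    and "\<forall>x. pos_def_form (D2f1 x)" and "\<forall>x. pos_def_form (D2f2 x)"
    and "\<forall>x. ((\<lambda>y. f1 y + f2 y) has_derivative blinfun_apply (Dsum x)) (at x)"
  shows "range Dsum = {a + b | a b. a \<in> range Df1 \<and> b \<in> range Df2}"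
proof -
  have d1: "\<And>x. (f1 has_derivative blinfun_apply (Df1 x)) (at x)"
    and d2: "\<And>x. (f2 has_derivative blinfun_apply (Df2 x)) (at x)"
    using assms(1,2) unfolding C2_with_def by auto
  have Dsum_eq: "Dsum x = Df1 x + Df2 x" for x
    using has_derivative_unique[OF assms(5)[rule_format] has_derivative_add[OF d1 d2]]
    by (intro blinfun_eqI) (simp add: blinfun.add_left)
  have "Df1 x1 + Df2 x2 \<in> range Dsum" for x1 x2
  proof -
    obtain c1 K1 where "0 < c1" and growth1: "\<And>z. K1 + c1 * norm z \<le> f1 z - Df1 x1 z"
      using pos_def_hessian_linear_growth[OF assms(1,3)] by blast
    obtain c2 K2 where "0 < c2" and growth2: "\<And>z. K2 + c2 * norm z \<le> f2 z - Df2 x2 z"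
      using pos_def_hessian_linear_growth[OF assms(2,4)] by blast
    have growth: "(K1 + K2) + (c1 + c2) * norm z \<le> (f1 z + f2 z) - (Df1 x1 + Df2 x2) z" for z
      using add_mono[OF growth1 growth2, of z z] by (simp add: blinfun.add_left algebra_simps)
    show ?thesis
      by (rule linear_growth_imp_in_range_derivative[OF _ _ growth])
        (use assms(5) \<open>0 < c1\<close> \<open>0 < c2\<close> in auto)
  qed
  then show ?thesis using Dsum_eq by blast
qed

end
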